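(* For every $n\ge1$ and every essential lattice congruence $R\in\mathcal C_n^*$, the minimum degree of the quotient graph $Q_R$ is exactly $n-1$.
   Context: $S_n$ is the set of permutations of $[n]$ with the weak order (inclusion of inversion sets); a lattice congruence is an equivalence relation compatible with joins and meets. Lattice congruences $R$ correspond bijectively to downsets $F_R$ of the forcing order on fences, where a cover edge joins $R$-equivalent permutations iff it lies in a fence of $F_R$. Fences. For $1\le a<b\le n$ and $L\subseteq\{a+1,\dots,b-1\}$, the fence $f(a,b,L)$ is the set of cover edges that swap adjacent entries $a,b$, with the values of $L$ to the left of $a,b$ and the other values between $a$ and $b$ to the right. Forcing order: $f(a,b,L)\prec f(c,d,M)$ iff $a\le c<d\le b$, $(a,b)\ne(c,d)$, $M=L\cap\{c+1,\dots,d-1\}$. $R$ is essential if $F_R$ contains no $f(a,a+1,\emptyset)$. $Q_R$ is the undirected cover graph of the lattice quotient $S_n/R$. *)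

theory Defs
  imports Main
begin

definition perms :: "nat \<Rightarrow> nat list set" where
  "perms n = {xs. length xs = n \<and> distinct xs \<and> set xs = {1..n}}"

definition invs :: "nat list \<Rightarrow> (nat \<times> nat) set" where
  "invs xs = {(xs ! j, xs ! i) | i j. i < j \<and> j < length xs \<and> xs ! j < xs ! i}"

definition weak_le :: "nat list \<Rightarrow> nat list \<Rightarrow> bool" where
  "weak_le x y \<longleftrightarrow> invs x \<subseteq> invs y"

definition wjoin :: "nat \<Rightarrow> nat list \<Rightarrow> nat list \<Rightarrow> nat list" where
  "wjoin n x y = (THE z. z \<in> perms n \<and> weak_le x z \<and> weak_le y z \<and>
      (\<forall>w\<in>perms n. weak_le x w \<and> weak_le y w \<longrightarrow> weak_le z w))"

definition wmeet :: "nat \<Rightarrow> nat list \<Rightarrow> nat list \<Rightarrow> nat list" where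
  "wmeet n x y = (THE z. z \<in> perms n \<and> weak_le z x \<and> weak_le z y \<and>
      (\<forall>w\<in>perms n. weak_le w x \<and> weak_le w y \<longrightarrow> weak_le w z))"

definition lattice_congruence :: "nat \<Rightarrow> (nat list \<times> nat list) set \<Rightarrow> bool" where
  "lattice_congruence n R \<longleftrightarrow> equiv (perms n) R \<and>
     (\<forall>x\<in>perms n. \<forall>y\<in>perms n. \<forall>z\<in>perms n. (x, y) \<in> R \<longrightarrow>
        (wjoin n x z, wjoin n y z) \<in> R \<and> (wmeet n x z, wmeet n y z) \<in> R)"

definition swap_adj :: "nat list \<Rightarrow> nat \<Rightarrow> nat list" where
  "swap_adj xs k = xs[k := xs ! Suc k, Suc k := xs ! k]"

text \<open>Fence f(a,b,L): cover edges (lower, upper) swapping adjacent entries a, b, with the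
  values of L left of a,b and the other values strictly between a and b to the right.\<close>
definition fence :: "nat \<Rightarrow> nat \<Rightarrow> nat \<Rightarrow> nat set \<Rightarrow> (nat list \<times> nat list) set" where
  "fence n a b L = {(x, swap_adj x k) | x k. x \<in> perms n \<and> Suc k < n \<and>
      x ! k = a \<and> x ! Suc k = b \<and>
      (\<forall>c\<in>L. c \<in> set (take k x)) \<and>
      (\<forall>c\<in>{a<..<b} - L. c \<in> set (drop (Suc (Suc k)) x))}"

definition F_of :: "nat \<Rightarrow> (nat list \<times> nat list) set \<Rightarrow> (nat \<times> nat \<times> nat set) set" where
  "F_of n R = {(a, b, L). 1 \<le> a \<and> a < b \<and> b \<le> n \<and> L \<subseteq> {a<..<b} \<and> fence n a b L \<subseteq> R}"

definition essential :: "nat \<Rightarrow> (nat list \<times> nat list) set \<Rightarrow> bool" where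
  "essential n R \<longleftrightarrow> (\<forall>a. (a, Suc a, {}) \<notin> F_of n R)"

text \<open>Quotient lattice S_n/R: classes ordered by X \<le> Y iff X \<or> Y = Y.\<close>
definition qle :: "nat \<Rightarrow> (nat list \<times> nat list) set \<Rightarrow> nat list set \<Rightarrow> nat list set \<Rightarrow> bool" where
  "qle n R X Y \<longleftrightarrow> (\<exists>x\<in>X. \<exists>y\<in>Y. (wjoin n x y, y) \<in> R)"

definition qcover :: "nat \<Rightarrow> (nat list \<times> nat list) set \<Rightarrow> nat list set \<Rightarrow> nat list set \<Rightarrow> bool" where
  "qcover n R X Y \<longleftrightarrow> X \<noteq> Y \<and> qle n R X Y \<and>
     \<not> (\<exists>Z\<in>perms n // R. Z \<noteq> X \<and> Z \<noteq> Y \<and> qle n R X Z \<and> qle n R Z Y)"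

definition qadj :: "nat \<Rightarrow> (nat list \<times> nat list) set \<Rightarrow> nat list set \<Rightarrow> nat list set \<Rightarrow> bool" where
  "qadj n R X Y \<longleftrightarrow> qcover n R X Y \<or> qcover n R Y X"

definition qdegree :: "nat \<Rightarrow> (nat list \<times> nat list) set \<Rightarrow> nat list set \<Rightarrow> nat" where
  "qdegree n R X = card {Y \<in> perms n // R. qadj n R X Y}"

definition min_degree_Q :: "nat \<Rightarrow> (nat list \<times> nat list) set \<Rightarrow> nat" where
  "min_degree_Q n R = Min (qdegree n R ` (perms n // R))"

end

theory Submission
  imports Defs
begin

(*
  Lower bound. For the class X of x, let L be the set of labels (the pairs of values swapped) of
  the cover edges of S_n with exactly one end in X. Distinct labels lead to distinct neighbours
  of X in Q_R: an edge leaving X upwards can be pushed along squares and hexagons of the weak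
  order to an ascent of the top element of X with the same label and the same target class, and
  two different ascents of one permutation cannot lead to the same class, because their meet is
  that permutation. Viewed as a graph on [n], L is connected: otherwise X would be closed under
  swapping adjacent entries lying on different sides of a cut S, so two consecutive values
  a, a + 1 separated by S could be made adjacent inside X, giving a contracted edge that swaps
  a and a + 1, which essentiality forbids. Hence deg X >= |L| >= n - 1.

  Upper bound. The class of the identity is the bottom of S_n/R and each of its upper covers is
  the class of one of the n - 1 atoms.
*)

section \<open>Permutations and the weak order\<close>

definition precedes :: "nat list \<Rightarrow> nat \<Rightarrow> nat \<Rightarrow> bool" where
  "precedes w a b \<longleftrightarrow> (\<exists>i j. i < j \<and> j < length w \<and> w ! i = a \<and> w ! j = b)"

lemma invs_eq_precedes: "invs w = {(a, b). a < b \<and> precedes w b a}"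
  unfolding invs_def precedes_def by auto

lemma precedes_nth_iff:
  assumes "distinct w" "i < length w" "j < length w"
  shows "precedes w (w ! i) (w ! j) \<longleftrightarrow> i < j"
  using assms unfolding precedes_def by (auto simp: nth_eq_iff_index_eq)

lemma precedes_in_set: "precedes w a b \<Longrightarrow> a \<in> set w \<and> b \<in> set w"
  unfolding precedes_def by auto

lemma precedes_irrefl: "distinct w \<Longrightarrow> \<not> precedes w a a"
  unfolding precedes_def by (auto simp: nth_eq_iff_index_eq)

lemma precedes_trans: "distinct w \<Longrightarrow> precedes w a b \<Longrightarrow> precedes w b c \<Longrightarrow> precedes w a c"
  unfolding precedes_def by (auto simp: nth_eq_iff_index_eq) (metis less_trans)

lemma precedes_asym: "distinct w \<Longrightarrow> precedes w a b \<Longrightarrow> \<not> precedes w b a"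
  using precedes_trans precedes_irrefl by blast

lemma precedes_total:
  assumes "a \<in> set w" "b \<in> set w" "a \<noteq> b"
  shows "precedes w a b \<or> precedes w b a"
proof -
  obtain i j where "i < length w" "j < length w" "w ! i = a" "w ! j = b"
    using assms by (auto simp: in_set_conv_nth)
  then show ?thesis unfolding precedes_def using assms(3) by (metis linorder_neqE_nat)
qed

lemma perms_distinct: "w \<in> perms n \<Longrightarrow> distinct w"
  and perms_length: "w \<in> perms n \<Longrightarrow> length w = n"
  and perms_set: "w \<in> perms n \<Longrightarrow> set w = {1..n}"
  unfolding perms_def by auto

lemma finite_perms: "finite (perms n)"
proof -
  have "perms n \<subseteq> {xs. set xs \<subseteq> {1..n} \<and> length xs = n}" unfolding perms_def by auto
  then show ?thesis using finite_lists_length_eq[of "{1..n}" n] finite_subset by auto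
qed

lemma finite_invs: "finite (invs w)"
proof -
  have "invs w \<subseteq> set w \<times> set w" unfolding invs_eq_precedes using precedes_in_set by blast
  then show ?thesis by (rule finite_subset) simp
qed

lemma length_swap_adj [simp]: "length (swap_adj w k) = length w"
  unfolding swap_adj_def by simp

lemma nth_swap_adj:
  "Suc k < length w \<Longrightarrow>
   swap_adj w k ! m = (if m = k then w ! Suc k else if m = Suc k then w ! k else w ! m)"
  unfolding swap_adj_def by (auto simp: nth_list_update)

lemma swap_adj_in_perms: "w \<in> perms n \<Longrightarrow> Suc k < n \<Longrightarrow> swap_adj w k \<in> perms n"
  unfolding perms_def swap_adj_def by (auto simp: distinct_swap set_swap)

lemma swap_adj_swap_adj: "Suc k < length w \<Longrightarrow> swap_adj (swap_adj w k) k = w"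
  by (rule nth_equalityI) (auto simp: nth_swap_adj)

lemma precedes_swap_adj:
  assumes "distinct w" "Suc k < length w"
  shows "precedes (swap_adj w k) a b \<longleftrightarrow>
    (precedes w a b \<and> \<not> (a = w ! k \<and> b = w ! Suc k)) \<or> (a = w ! Suc k \<and> b = w ! k)"
proof (cases "a \<in> set w \<and> b \<in> set w")
  case False
  have "set (swap_adj w k) = set w" using assms by (simp add: swap_adj_def set_swap)
  then show ?thesis using False precedes_in_set assms(2) by (metis Suc_lessD nth_mem)
next
  case True
  then obtain p q where pq: "p < length w" "q < length w" "a = w ! p" "b = w ! q"
    by (auto simp: in_set_conv_nth)
  define s where "s = (\<lambda>i. if i = k then Suc k else if i = Suc k then k else i)"
  have ds: "distinct (swap_adj w k)" using assms by (simp add: swap_adj_def distinct_swap)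
  have sl: "s i < length w" if "i < length w" for i using that assms by (auto simp: s_def)
  have sw: "swap_adj w k ! s i = w ! i" for i using assms by (auto simp: s_def nth_swap_adj)
  have "precedes (swap_adj w k) a b \<longleftrightarrow> s p < s q"
    using precedes_nth_iff[OF ds, of "s p" "s q"] sl pq sw by simp
  moreover have "precedes w a b \<longleftrightarrow> p < q" using precedes_nth_iff[OF assms(1)] pq by simp
  moreover have "a = w ! k \<longleftrightarrow> p = k" "b = w ! Suc k \<longleftrightarrow> q = Suc k"
    "a = w ! Suc k \<longleftrightarrow> p = Suc k" "b = w ! k \<longleftrightarrow> q = k"
    using pq assms nth_eq_iff_index_eq[OF assms(1)] by (metis Suc_lessD)+
  moreover have "s p < s q \<longleftrightarrow> (p < q \<and> \<not> (p = k \<and> q = Suc k)) \<or> (p = Suc k \<and> q = k)"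
    unfolding s_def by auto
  ultimately show ?thesis by blast
qed

lemma pair_notin_invs:
  assumes w: "w \<in> perms n" and "i < j" "j < n"
  shows "(w ! i, w ! j) \<notin> invs w"
proof -
  have "precedes w (w ! i) (w ! j)"
    using precedes_nth_iff[OF perms_distinct[OF w]] perms_length[OF w] assms by simp
  then show ?thesis unfolding invs_eq_precedes using precedes_asym[OF perms_distinct[OF w]] by auto
qed

lemma pair_in_invs_iff:
  assumes w: "w \<in> perms n" and "i < j" "j < n"
  shows "(w ! j, w ! i) \<in> invs w \<longleftrightarrow> w ! j < w ! i"
proof -
  have "precedes w (w ! i) (w ! j)"
    using precedes_nth_iff[OF perms_distinct[OF w]] perms_length[OF w] assms by simp
  then show ?thesis unfolding invs_eq_precedes by auto
qed

lemma card_predecessors_nth: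
  assumes "distinct x" "i < length x"
  shows "card {u \<in> set x. precedes x u (x ! i)} = i"
proof -
  have "{u \<in> set x. precedes x u (x ! i)} = (!) x ` {..<i}"
  proof
    show "{u \<in> set x. precedes x u (x ! i)} \<subseteq> (!) x ` {..<i}"
    proof
      fix u assume "u \<in> {u \<in> set x. precedes x u (x ! i)}"
      then obtain j where j: "j < length x" "u = x ! j" "precedes x (x ! j) (x ! i)"
        by (auto simp: in_set_conv_nth)
      then show "u \<in> (!) x ` {..<i}" using precedes_nth_iff[OF assms(1) j(1) assms(2)] by auto
    qed
    show "(!) x ` {..<i} \<subseteq> {u \<in> set x. precedes x u (x ! i)}"
      using precedes_nth_iff[OF assms(1) _ assms(2)] assms(2) by auto
  qed
  moreover have "inj_on ((!) x) {..<i}"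
    using assms by (auto simp: inj_on_def nth_eq_iff_index_eq)
  ultimately show ?thesis by (simp add: card_image)
qed

lemma list_eq_if_precedes_eq:
  assumes "distinct x" "distinct y" "set x = set y" "\<And>a b. precedes x a b \<longleftrightarrow> precedes y a b"
  shows "x = y"
proof (rule nth_equalityI)
  show "length x = length y"
    using distinct_card[OF assms(1)] distinct_card[OF assms(2)] assms(3) by simp
  fix i assume i: "i < length x"
  have "x ! i \<in> set y" using nth_mem[OF i] assms(3) by blast
  then obtain i' where i': "i' < length y" "y ! i' = x ! i" by (auto simp: in_set_conv_nth)
  have "i = card {u \<in> set x. precedes x u (x ! i)}"
    using card_predecessors_nth[OF assms(1) i] by simp
  also have "\<dots> = card {u \<in> set y. precedes y u (y ! i')}" using assms(3,4) i' by simp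
  also have "\<dots> = i'" using card_predecessors_nth[OF assms(2) i'(1)] .
  finally show "x ! i = y ! i" using i' by simp
qed

lemma perms_invs_inj:
  assumes x: "x \<in> perms n" and y: "y \<in> perms n" and eq: "invs x = invs y"
  shows "x = y"
proof -
  have d: "distinct x" "distinct y" and s: "set x = {1..n}" "set y = {1..n}"
    using x y perms_distinct perms_set by auto
  have "precedes x a b \<longleftrightarrow> precedes y a b" for a b
  proof (cases "a \<in> {1..n} \<and> b \<in> {1..n} \<and> a \<noteq> b")
    case True
    then have "precedes x a b \<longleftrightarrow> \<not> precedes x b a" "precedes y a b \<longleftrightarrow> \<not> precedes y b a"
      using precedes_total precedes_asym d s by metis+
    moreover have "precedes x b a \<longleftrightarrow> precedes y b a" if "a < b"
      using eq that unfolding invs_eq_precedes by blast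
    moreover have "precedes x a b \<longleftrightarrow> precedes y a b" if "b < a"
      using eq that unfolding invs_eq_precedes by blast
    ultimately show ?thesis using True by (metis linorder_neqE_nat)
  next
    case False
    then show ?thesis using precedes_in_set precedes_irrefl d s by metis
  qed
  then show ?thesis using list_eq_if_precedes_eq d s by metis
qed

lemma weak_le_antisym: "x \<in> perms n \<Longrightarrow> y \<in> perms n \<Longrightarrow> weak_le x y \<Longrightarrow> weak_le y x \<Longrightarrow> x = y"
  unfolding weak_le_def using perms_invs_inj by blast

lemma weak_le_refl [simp]: "weak_le x x"
  unfolding weak_le_def by blast

definition ascent :: "nat \<Rightarrow> nat list \<Rightarrow> nat \<Rightarrow> bool" where
  "ascent n w k \<longleftrightarrow> Suc k < n \<and> w ! k < w ! Suc k"

definition swap_label :: "nat list \<Rightarrow> nat \<Rightarrow> nat \<times> nat" where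
  "swap_label w k = (w ! k, w ! Suc k)"

lemma ascent_swap_in_perms: "w \<in> perms n \<Longrightarrow> ascent n w k \<Longrightarrow> swap_adj w k \<in> perms n"
  unfolding ascent_def using swap_adj_in_perms by blast

lemma ascent_label_notin_invs: "w \<in> perms n \<Longrightarrow> ascent n w k \<Longrightarrow> swap_label w k \<notin> invs w"
  unfolding ascent_def swap_label_def using pair_notin_invs by blast

lemma ascent_swap_invs:
  assumes w: "w \<in> perms n" and k: "ascent n w k"
  shows "invs (swap_adj w k) = insert (swap_label w k) (invs w)"
proof -
  have d: "distinct w" and l: "length w = n" using w perms_distinct perms_length by auto
  have "\<not> precedes w (w ! Suc k) (w ! k)"
    using precedes_nth_iff[OF d] l k unfolding ascent_def by simp
  then show ?thesis
    unfolding invs_eq_precedes swap_label_def using precedes_swap_adj[OF d, of k] l k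
    unfolding ascent_def by auto
qed

lemma ascent_weak_le_swap: "w \<in> perms n \<Longrightarrow> ascent n w k \<Longrightarrow> weak_le w (swap_adj w k)"
  unfolding weak_le_def using ascent_swap_invs by blast

lemma ascent_cover:
  assumes w: "w \<in> perms n" and k: "ascent n w k" and z: "z \<in> perms n"
    and "weak_le w z" "weak_le z (swap_adj w k)"
  shows "z = w \<or> z = swap_adj w k"
proof -
  have sub: "invs w \<subseteq> invs z" "invs z \<subseteq> insert (swap_label w k) (invs w)"
    using assms ascent_swap_invs[OF w k] unfolding weak_le_def by auto
  have "invs z = invs w \<or> invs z = invs (swap_adj w k)"
  proof (cases "swap_label w k \<in> invs z")
    case True
    then show ?thesis using sub ascent_swap_invs[OF w k] by auto
  next
    case False
    then show ?thesis using sub by auto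
  qed
  then show ?thesis using perms_invs_inj[OF z] w ascent_swap_in_perms[OF w k] by metis
qed

lemma commuting_ascents:
  assumes "Suc j < k \<or> Suc k < j" "ascent n u j" "ascent n u k" "length u = n"
  shows "ascent n (swap_adj u j) k" "swap_label (swap_adj u j) k = swap_label u k"
  using assms by (auto simp: ascent_def swap_label_def nth_swap_adj)

lemma hexagon_ascents:
  assumes "Suc (Suc i) < n" "length u = n" "u ! i < u ! Suc i" "u ! Suc i < u ! Suc (Suc i)"
  shows "ascent n (swap_adj u i) (Suc i)"
    "swap_label (swap_adj u i) (Suc i) = (u ! i, u ! Suc (Suc i))"
    "ascent n (swap_adj (swap_adj u i) (Suc i)) i"
    "swap_label (swap_adj (swap_adj u i) (Suc i)) i = (u ! Suc i, u ! Suc (Suc i))"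
    "ascent n (swap_adj u (Suc i)) i"
    "swap_label (swap_adj u (Suc i)) i = (u ! i, u ! Suc (Suc i))"
    "ascent n (swap_adj (swap_adj u (Suc i)) i) (Suc i)"
    "swap_label (swap_adj (swap_adj u (Suc i)) i) (Suc i) = (u ! i, u ! Suc i)"
  using assms by (auto simp: ascent_def swap_label_def nth_swap_adj)

definition id_perm :: "nat \<Rightarrow> nat list" where
  "id_perm n = [1..<Suc n]"

lemma id_perm_nth: "i < n \<Longrightarrow> id_perm n ! i = Suc i"
  unfolding id_perm_def by (simp del: upt_Suc)

lemma id_perm_in_perms: "id_perm n \<in> perms n"
  unfolding perms_def id_perm_def by auto

lemma invs_id_perm: "invs (id_perm n) = {}"
  unfolding invs_def id_perm_def by (auto simp del: upt_Suc)

lemma id_perm_weak_le: "weak_le (id_perm n) x"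
  unfolding weak_le_def invs_id_perm by simp

lemma ascent_id_perm: "Suc k < n \<Longrightarrow> ascent n (id_perm n) k"
  unfolding ascent_def using id_perm_nth by simp

lemma invs_swap_id_perm: "Suc k < n \<Longrightarrow> invs (swap_adj (id_perm n) k) = {(Suc k, Suc (Suc k))}"
  using ascent_swap_invs[OF id_perm_in_perms ascent_id_perm] invs_id_perm id_perm_nth
  unfolding swap_label_def by simp

section \<open>The weak order is a lattice\<close>

definition pairs :: "nat \<Rightarrow> (nat \<times> nat) set" where
  "pairs n = {(c, d). 1 \<le> c \<and> c < d \<and> d \<le> n}"

text \<open>The inversion sets of permutations are exactly the biclosed sets of pairs, and the join of
  two permutations is realised by the transitive closure of the union of their inversion sets.\<close>

definition biclosed :: "nat \<Rightarrow> (nat \<times> nat) set \<Rightarrow> bool" where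
  "biclosed n T \<longleftrightarrow> T \<subseteq> pairs n \<and> trans T \<and>
     (\<forall>c d e. (c, e) \<in> T \<longrightarrow> c < d \<longrightarrow> d < e \<longrightarrow> (c, d) \<in> T \<or> (d, e) \<in> T)"

lemma invs_biclosed:
  assumes w: "w \<in> perms n"
  shows "biclosed n (invs w)"
proof -
  have d: "distinct w" and s: "set w = {1..n}" using w perms_distinct perms_set by auto
  have "invs w \<subseteq> pairs n"
    unfolding invs_eq_precedes pairs_def using precedes_in_set s by fastforce
  moreover have "trans (invs w)"
    unfolding trans_def invs_eq_precedes using precedes_trans[OF d] by auto
  moreover have "(c, d) \<in> invs w \<or> (d, e) \<in> invs w"
    if "(c, e) \<in> invs w" "c < d" "d < e" for c d e
  proof (cases "precedes w d c")
    case True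
    then show ?thesis using that unfolding invs_eq_precedes by auto
  next
    case False
    have "(c, e) \<in> pairs n" using that \<open>invs w \<subseteq> pairs n\<close> by blast
    then have "c \<in> set w" "d \<in> set w" using s that by (auto simp: pairs_def)
    moreover have "precedes w e c" using that(1) unfolding invs_eq_precedes by auto
    ultimately have "precedes w e d" using False precedes_total precedes_trans[OF d] that by metis
    then show ?thesis using that unfolding invs_eq_precedes by auto
  qed
  ultimately show ?thesis unfolding biclosed_def by blast
qed

lemma invs_trans: "w \<in> perms n \<Longrightarrow> (a, b) \<in> invs w \<Longrightarrow> (b, c) \<in> invs w \<Longrightarrow> (a, c) \<in> invs w"
  using invs_biclosed unfolding biclosed_def trans_def by blast

text \<open>Each element is placed at the position given by the number of its \<open>B\<close>-predecessors.\<close>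

lemma exists_list_in_order:
  assumes fin: "finite V" and irrefl: "\<And>c. \<not> B c c" and trans: "\<And>c d e. B c d \<Longrightarrow> B d e \<Longrightarrow> B c e"
    and total: "\<And>c d. c \<noteq> d \<Longrightarrow> B c d \<or> B d c"
  shows "\<exists>w. distinct w \<and> set w = V \<and> (\<forall>a b. precedes w a b \<longleftrightarrow> a \<in> V \<and> b \<in> V \<and> B a b)"
proof -
  define rank where "rank = (\<lambda>c. card {d \<in> V. B d c})"
  have rank_less: "rank c < rank d" if "c \<in> V" "B c d" for c d
  proof -
    have "{e \<in> V. B e c} \<subset> {e \<in> V. B e d}"
    proof
      show "{e \<in> V. B e c} \<subseteq> {e \<in> V. B e d}" using trans that by blast
      show "{e \<in> V. B e c} \<noteq> {e \<in> V. B e d}" using that irrefl by blast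
    qed
    then show ?thesis unfolding rank_def using fin by (simp add: psubset_card_mono)
  qed
  have rank_iff: "rank c < rank d \<longleftrightarrow> B c d" if "c \<in> V" "d \<in> V" for c d
    using rank_less total that by (metis less_asym less_irrefl)
  have inj: "inj_on rank V" by (rule inj_onI) (metis total rank_less less_irrefl)
  have rank_lt: "rank c < card V" if "c \<in> V" for c
  proof -
    have "{d \<in> V. B d c} \<subseteq> V - {c}" using irrefl by auto
    then have "rank c \<le> card (V - {c})" unfolding rank_def using fin by (simp add: card_mono)
    also have "\<dots> < card V" using card_Diff1_less[OF fin that] .
    finally show ?thesis .
  qed
  have "rank ` V = {0..<card V}"
  proof (rule card_subset_eq)
    show "rank ` V \<subseteq> {0..<card V}" using rank_lt by auto
    show "card (rank ` V) = card {0..<card V}" using inj card_image by fastforce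
  qed simp
  then have bij: "bij_betw rank V {0..<card V}" using inj unfolding bij_betw_def by simp
  define w where "w = map (the_inv_into V rank) [0..<card V]"
  have nth_w: "w ! rank c = c" if "c \<in> V" for c
    unfolding w_def using rank_lt[OF that] the_inv_into_f_f[OF inj that] by simp
  have d: "distinct w" and s: "set w = V"
    unfolding w_def using bij_betw_the_inv_into[OF bij]
    by (simp_all add: distinct_map bij_betw_imp_inj_on bij_betw_imp_surj_on)
  have "precedes w a b \<longleftrightarrow> a \<in> V \<and> b \<in> V \<and> B a b" for a b
  proof (cases "a \<in> V \<and> b \<in> V")
    case True
    then have "precedes w a b \<longleftrightarrow> rank a < rank b"
      using precedes_nth_iff[OF d, of "rank a" "rank b"] nth_w rank_lt unfolding w_def by simp
    then show ?thesis using rank_iff True by simp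
  next
    case False
    then show ?thesis using precedes_in_set s by blast
  qed
  then show ?thesis using d s by blast
qed

lemma biclosed_realized:
  assumes bc: "biclosed n T"
  shows "\<exists>w \<in> perms n. invs w = T"
proof -
  define B where "B = (\<lambda>c d. (c < d \<and> (c, d) \<notin> T) \<or> (d < c \<and> (d, c) \<in> T))"
  have sub: "T \<subseteq> pairs n" and tr: "\<And>c d e. (c, d) \<in> T \<Longrightarrow> (d, e) \<in> T \<Longrightarrow> (c, e) \<in> T"
    and co: "\<And>c d e. (c, e) \<in> T \<Longrightarrow> c < d \<Longrightarrow> d < e \<Longrightarrow> (c, d) \<in> T \<or> (d, e) \<in> T"
    using bc unfolding biclosed_def trans_def by blast+
  have B_irrefl: "\<not> B c c" for c unfolding B_def by auto
  have B_total: "c \<noteq> d \<Longrightarrow> B c d \<or> B d c" for c d unfolding B_def by auto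
  have B_trans: "B c e" if "B c d" "B d e" for c d e
  proof -
    have "c \<noteq> e" "c \<noteq> d" "d \<noteq> e" using that B_irrefl unfolding B_def by auto
    then consider "c < d" "d < e" | "c < e" "e < d" | "d < c" "c < e" | "d < e" "e < c"
      | "e < c" "c < d" | "e < d" "d < c" by (metis linorder_neqE_nat)
    then show ?thesis
    proof cases
      case 1 then show ?thesis using that co unfolding B_def by auto
    next
      case 2 then show ?thesis using that tr unfolding B_def by auto
    next
      case 3 then show ?thesis using that tr unfolding B_def by auto
    next
      case 4 then show ?thesis using that co unfolding B_def by auto
    next
      case 5 then show ?thesis using that co unfolding B_def by auto
    next
      case 6 then show ?thesis using that tr unfolding B_def by auto
    qed
  qed
  obtain w where w: "distinct w" "set w = {1..n}"
      and prec: "\<And>a b. precedes w a b \<longleftrightarrow> a \<in> {1..n} \<and> b \<in> {1..n} \<and> B a b"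
    using exists_list_in_order[of "{1..n}" B] B_irrefl B_trans B_total by blast
  have "w \<in> perms n" using w distinct_card[OF w(1)] unfolding perms_def by simp
  moreover have "invs w = T"
    unfolding invs_eq_precedes prec B_def using sub unfolding pairs_def by fastforce
  ultimately show ?thesis by blast
qed

lemma biclosed_trancl_Un:
  assumes "biclosed n I" "biclosed n J"
  shows "biclosed n ((I \<union> J)\<^sup>+)"
proof -
  let ?U = "I \<union> J"
  have sU: "?U \<subseteq> pairs n" using assms unfolding biclosed_def by blast
  have "trans (pairs n)" unfolding trans_def pairs_def by auto
  then have sub: "?U\<^sup>+ \<subseteq> pairs n" using trancl_mono_subset[OF sU] by simp
  have coU: "(c, d) \<in> ?U \<or> (d, e) \<in> ?U" if "(c, e) \<in> ?U" "c < d" "d < e" for c d e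
    using assms that unfolding biclosed_def by blast
  have co: "\<forall>d. c < d \<longrightarrow> d < e \<longrightarrow> (c, d) \<in> ?U\<^sup>+ \<or> (d, e) \<in> ?U\<^sup>+" if "(c, e) \<in> ?U\<^sup>+" for c e
    using that
  proof (induction rule: trancl_induct)
    case (base y)
    then show ?case using coU by blast
  next
    case (step y z)
    have cy: "(c, y) \<in> ?U\<^sup>+" and yz: "(y, z) \<in> ?U" by fact+
    have "y < z" using yz sU unfolding pairs_def by auto
    show ?case
    proof (intro allI impI)
      fix d assume d: "c < d" "d < z"
      consider "d < y" | "d = y" | "y < d" by linarith
      then show "(c, d) \<in> ?U\<^sup>+ \<or> (d, z) \<in> ?U\<^sup>+"
      proof cases
        case 1
        then have "(c, d) \<in> ?U\<^sup>+ \<or> (d, y) \<in> ?U\<^sup>+" using step.IH d by blast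
        then show ?thesis using yz by (meson trancl.trancl_into_trancl)
      next
        case 2
        then show ?thesis using cy by simp
      next
        case 3
        then have "(y, d) \<in> ?U \<or> (d, z) \<in> ?U" using coU yz d by blast
        then show ?thesis using cy by (meson r_into_trancl trancl.trancl_into_trancl)
      qed
    qed
  qed
  show ?thesis unfolding biclosed_def by (intro conjI sub trans_trancl) (use co in blast)
qed

lemma biclosed_Diff:
  assumes "biclosed n T"
  shows "biclosed n (pairs n - T)"
proof -
  have "T \<subseteq> pairs n" and tr: "\<And>c d e. (c, d) \<in> T \<Longrightarrow> (d, e) \<in> T \<Longrightarrow> (c, e) \<in> T"
    and co: "\<And>c d e. (c, e) \<in> T \<Longrightarrow> c < d \<Longrightarrow> d < e \<Longrightarrow> (c, d) \<in> T \<or> (d, e) \<in> T"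
    using assms unfolding biclosed_def trans_def by blast+
  have "(c, e) \<in> pairs n - T" if "(c, d) \<in> pairs n - T" "(d, e) \<in> pairs n - T" for c d e
  proof -
    have "(c, e) \<in> pairs n" "c < d" "d < e" using that unfolding pairs_def by auto
    then show ?thesis using co that by blast
  qed
  then have "trans (pairs n - T)" unfolding trans_def by blast
  moreover have "(c, d) \<in> pairs n - T \<or> (d, e) \<in> pairs n - T"
    if "(c, e) \<in> pairs n - T" "c < d" "d < e" for c d e
  proof -
    have "(c, d) \<in> pairs n" "(d, e) \<in> pairs n" using that unfolding pairs_def by auto
    then show ?thesis using tr that by blast
  qed
  ultimately show ?thesis unfolding biclosed_def by blast
qed

lemma weak_join_exists:
  assumes "x \<in> perms n" "y \<in> perms n"
  shows "\<exists>z \<in> perms n. weak_le x z \<and> weak_le y z \<and>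
    (\<forall>w \<in> perms n. weak_le x w \<and> weak_le y w \<longrightarrow> weak_le z w)"
proof -
  define U where "U = invs x \<union> invs y"
  have "biclosed n (U\<^sup>+)" unfolding U_def using biclosed_trancl_Un invs_biclosed assms by blast
  then obtain z where z: "z \<in> perms n" "invs z = U\<^sup>+" using biclosed_realized by blast
  have "weak_le z w" if "w \<in> perms n" "weak_le x w" "weak_le y w" for w
  proof -
    have "U \<subseteq> invs w" using that unfolding U_def weak_le_def by blast
    then have "U\<^sup>+ \<subseteq> (invs w)\<^sup>+" by (rule trancl_mono_subset)
    moreover have "trans (invs w)" using invs_biclosed[OF that(1)] unfolding biclosed_def by blast
    ultimately show ?thesis unfolding weak_le_def z(2) by simp
  qed
  moreover have "U \<subseteq> invs z" unfolding z(2) by (rule subrelI) (rule r_into_trancl)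
  ultimately show ?thesis using z unfolding weak_le_def U_def by blast
qed

lemma weak_meet_exists:
  assumes "x \<in> perms n" "y \<in> perms n"
  shows "\<exists>z \<in> perms n. weak_le z x \<and> weak_le z y \<and>
    (\<forall>w \<in> perms n. weak_le w x \<and> weak_le w y \<longrightarrow> weak_le w z)"
proof -
  define U where "U = (pairs n - invs x) \<union> (pairs n - invs y)"
  have "biclosed n (pairs n - U\<^sup>+)"
    unfolding U_def using assms by (intro biclosed_Diff biclosed_trancl_Un invs_biclosed)
  then obtain z where z: "z \<in> perms n" "invs z = pairs n - U\<^sup>+" using biclosed_realized by blast
  have "weak_le w z" if "w \<in> perms n" "weak_le w x" "weak_le w y" for w
  proof -
    have "U \<subseteq> pairs n - invs w" using that unfolding U_def weak_le_def by blast
    then have "U\<^sup>+ \<subseteq> (pairs n - invs w)\<^sup>+" by (rule trancl_mono_subset)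
    moreover have "trans (pairs n - invs w)"
      using biclosed_Diff[OF invs_biclosed[OF that(1)]] unfolding biclosed_def by blast
    moreover have "invs w \<subseteq> pairs n" using invs_biclosed[OF that(1)] unfolding biclosed_def by blast
    ultimately show ?thesis unfolding weak_le_def z(2) by auto
  qed
  moreover have "U \<subseteq> U\<^sup>+" by (rule subrelI) (rule r_into_trancl)
  then have "invs z \<subseteq> pairs n - U" unfolding z(2) by blast
  then have "weak_le z x" "weak_le z y" unfolding weak_le_def U_def by blast+
  ultimately show ?thesis using z by blast
qed

lemma wjoin:
  assumes "x \<in> perms n" "y \<in> perms n"
  shows "wjoin n x y \<in> perms n" "weak_le x (wjoin n x y)" "weak_le y (wjoin n x y)"
    "\<And>w. w \<in> perms n \<Longrightarrow> weak_le x w \<Longrightarrow> weak_le y w \<Longrightarrow> weak_le (wjoin n x y) w"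
proof -
  let ?P = "\<lambda>z. z \<in> perms n \<and> weak_le x z \<and> weak_le y z \<and>
    (\<forall>w \<in> perms n. weak_le x w \<and> weak_le y w \<longrightarrow> weak_le z w)"
  obtain z where z: "?P z" using weak_join_exists[OF assms] by blast
  have "?P z' \<Longrightarrow> z' = z" for z' using z weak_le_antisym[of z' n z] by blast
  then have "wjoin n x y = z" unfolding wjoin_def using z by (rule the_equality[rotated])
  then show "wjoin n x y \<in> perms n" "weak_le x (wjoin n x y)" "weak_le y (wjoin n x y)"
    "\<And>w. w \<in> perms n \<Longrightarrow> weak_le x w \<Longrightarrow> weak_le y w \<Longrightarrow> weak_le (wjoin n x y) w"
    using z by auto
qed

lemma wmeet:
  assumes "x \<in> perms n" "y \<in> perms n"
  shows "wmeet n x y \<in> perms n" "weak_le (wmeet n x y) x" "weak_le (wmeet n x y) y"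
    "\<And>w. w \<in> perms n \<Longrightarrow> weak_le w x \<Longrightarrow> weak_le w y \<Longrightarrow> weak_le w (wmeet n x y)"
proof -
  let ?P = "\<lambda>z. z \<in> perms n \<and> weak_le z x \<and> weak_le z y \<and>
    (\<forall>w \<in> perms n. weak_le w x \<and> weak_le w y \<longrightarrow> weak_le w z)"
  obtain z where z: "?P z" using weak_meet_exists[OF assms] by blast
  have "?P z' \<Longrightarrow> z' = z" for z' using z weak_le_antisym[of z' n z] by blast
  then have "wmeet n x y = z" unfolding wmeet_def using z by (rule the_equality[rotated])
  then show "wmeet n x y \<in> perms n" "weak_le (wmeet n x y) x" "weak_le (wmeet n x y) y"
    "\<And>w. w \<in> perms n \<Longrightarrow> weak_le w x \<Longrightarrow> weak_le w y \<Longrightarrow> weak_le w (wmeet n x y)"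
    using z by auto
qed

lemma wjoin_eqI:
  assumes "x \<in> perms n" "y \<in> perms n" "z \<in> perms n" "weak_le x z" "weak_le y z"
    "\<And>w. w \<in> perms n \<Longrightarrow> weak_le x w \<Longrightarrow> weak_le y w \<Longrightarrow> weak_le z w"
  shows "wjoin n x y = z"
proof (rule weak_le_antisym)
  show "weak_le (wjoin n x y) z" using wjoin(4)[OF assms(1,2,3,4,5)] .
  show "weak_le z (wjoin n x y)" using assms(6) wjoin[OF assms(1,2)] by blast
qed (use wjoin assms in blast)+

lemma wmeet_eqI:
  assumes "x \<in> perms n" "y \<in> perms n" "z \<in> perms n" "weak_le z x" "weak_le z y"
    "\<And>w. w \<in> perms n \<Longrightarrow> weak_le w x \<Longrightarrow> weak_le w y \<Longrightarrow> weak_le w z"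
  shows "wmeet n x y = z"
proof (rule weak_le_antisym)
  show "weak_le z (wmeet n x y)" using wmeet(4)[OF assms(1,2,3,4,5)] .
  show "weak_le (wmeet n x y) z" using assms(6) wmeet[OF assms(1,2)] by blast
qed (use wmeet assms in blast)+

lemma wjoin_absorb: "x \<in> perms n \<Longrightarrow> y \<in> perms n \<Longrightarrow> weak_le x y \<Longrightarrow> wjoin n x y = y"
  using wjoin_eqI[of x n y y] by simp

lemma wjoin_absorb': "x \<in> perms n \<Longrightarrow> y \<in> perms n \<Longrightarrow> weak_le x y \<Longrightarrow> wjoin n y x = y"
  using wjoin_eqI[of y n x y] by simp

lemma wmeet_absorb: "x \<in> perms n \<Longrightarrow> y \<in> perms n \<Longrightarrow> weak_le x y \<Longrightarrow> wmeet n x y = x"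
  using wmeet_eqI[of x n y x] by simp

lemma wmeet_absorb': "x \<in> perms n \<Longrightarrow> y \<in> perms n \<Longrightarrow> weak_le x y \<Longrightarrow> wmeet n y x = x"
  using wmeet_eqI[of y n x x] by simp

lemma wjoin_commute:
  assumes "x \<in> perms n" "y \<in> perms n"
  shows "wjoin n x y = wjoin n y x"
  by (rule wjoin_eqI[OF assms wjoin(1,3,2,4)[OF assms(2,1)]])

lemma wmeet_commute:
  assumes "x \<in> perms n" "y \<in> perms n"
  shows "wmeet n x y = wmeet n y x"
  by (rule wmeet_eqI[OF assms wmeet(1,3,2,4)[OF assms(2,1)]])

lemma wmeet_eq_common_part:
  assumes "u \<in> perms n" "a \<in> perms n" "b \<in> perms n"
    and "invs a = A \<union> invs u" "invs b = B \<union> invs u" "A \<inter> B = {}"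
  shows "wmeet n a b = u"
proof (rule wmeet_eqI[OF assms(2,3,1)])
  show "weak_le u a" "weak_le u b" unfolding weak_le_def assms(4,5) by auto
  fix w assume "weak_le w a" "weak_le w b"
  then show "weak_le w u" unfolding weak_le_def assms(4,5) using assms(6) by blast
qed

lemma exists_ascent_label_in_invs:
  assumes x: "x \<in> perms n" and y: "y \<in> perms n" and xy: "weak_le x y"
  shows "i < j \<Longrightarrow> j < n \<Longrightarrow> x ! i < x ! j \<Longrightarrow> (x ! i, x ! j) \<in> invs y \<Longrightarrow>
    \<exists>k. ascent n x k \<and> swap_label x k \<in> invs y"
proof (induction "j - i" arbitrary: i rule: less_induct)
  case less
  have ytr: "\<And>c d e. (c, d) \<in> invs y \<Longrightarrow> (d, e) \<in> invs y \<Longrightarrow> (c, e) \<in> invs y"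
    and yco: "\<And>c d e. (c, e) \<in> invs y \<Longrightarrow> c < d \<Longrightarrow> d < e \<Longrightarrow> (c, d) \<in> invs y \<or> (d, e) \<in> invs y"
    using invs_biclosed[OF y] unfolding biclosed_def trans_def by blast+
  have xsub: "invs x \<subseteq> invs y" using xy unfolding weak_le_def .
  have dx: "distinct x" and lx: "length x = n" using x perms_distinct perms_length by auto
  show ?case
  proof (cases "j = Suc i")
    case True
    then show ?thesis using less.prems unfolding ascent_def swap_label_def by auto
  next
    case False
    then have ij: "Suc i < j" using less.prems by simp
    let ?a = "x ! i" and ?b = "x ! j" and ?e = "x ! Suc i"
    have IH: "\<exists>k. ascent n x k \<and> swap_label x k \<in> invs y"
      if "?e < ?b" "(?e, ?b) \<in> invs y"
      using less.hyps[of "Suc i"] ij less.prems(2) that by auto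
    have "?e \<noteq> ?a" "?e \<noteq> ?b"
      using nth_eq_iff_index_eq[OF dx, of "Suc i" i] nth_eq_iff_index_eq[OF dx, of "Suc i" j]
        lx ij less.prems by auto
    then consider "?a < ?e" "?e < ?b" | "?b < ?e" | "?e < ?a" using less.prems by linarith
    then show ?thesis
    proof cases
      case 1
      then have "(?a, ?e) \<in> invs y \<or> (?e, ?b) \<in> invs y" using yco less.prems by blast
      then show ?thesis
        using 1 ij less.prems IH unfolding ascent_def swap_label_def by (auto intro: exI[of _ i])
    next
      case 2
      have "(?b, ?e) \<in> invs x" using pair_in_invs_iff[OF x, of "Suc i" j] ij less.prems 2 by simp
      then have "(?a, ?e) \<in> invs y" using ytr less.prems xsub by blast
      then show ?thesis
        using 2 ij less.prems unfolding ascent_def swap_label_def by (intro exI[of _ i]) auto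
    next
      case 3
      have "(?e, ?a) \<in> invs x" using pair_in_invs_iff[OF x, of i "Suc i"] ij less.prems 3 by simp
      then show ?thesis using ytr less.prems xsub IH 3 by fastforce
    qed
  qed
qed

lemma exists_ascent_below:
  assumes x: "x \<in> perms n" and y: "y \<in> perms n" and xy: "weak_le x y" and ne: "x \<noteq> y"
  shows "\<exists>k. ascent n x k \<and> weak_le (swap_adj x k) y"
proof -
  have "invs x \<noteq> invs y" using perms_invs_inj x y ne by blast
  then obtain a b where ab: "(a, b) \<in> invs y" "(a, b) \<notin> invs x"
    using xy unfolding weak_le_def by auto
  have "(a, b) \<in> pairs n" using ab invs_biclosed[OF y] unfolding biclosed_def by blast
  then have abn: "a \<in> set x" "b \<in> set x" "a < b" using perms_set[OF x] unfolding pairs_def by auto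
  obtain i j where ij: "i < n" "j < n" "x ! i = a" "x ! j = b"
    using abn perms_length[OF x] by (auto simp: in_set_conv_nth)
  have "i \<noteq> j" using ij abn by auto
  moreover have "\<not> j < i" using pair_in_invs_iff[OF x, of j i] ij abn ab by auto
  ultimately have "i < j" by simp
  then obtain k where k: "ascent n x k" "swap_label x k \<in> invs y"
    using exists_ascent_label_in_invs[OF x y xy] ij abn ab by blast
  then have "weak_le (swap_adj x k) y"
    using ascent_swap_invs[OF x k(1)] xy unfolding weak_le_def by simp
  then show ?thesis using k by blast
qed

section \<open>Lattice congruences of the weak order\<close>

locale lattice_cong =
  fixes n :: nat and R :: "(nat list \<times> nat list) set"
  assumes congruence: "lattice_congruence n R"
begin

lemma equiv_perms: "equiv (perms n) R"
  using congruence unfolding lattice_congruence_def by blast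

lemma cong_in_perms: "(x, y) \<in> R \<Longrightarrow> x \<in> perms n \<and> y \<in> perms n"
  using equiv_perms unfolding equiv_def refl_on_def by blast

lemma cong_refl: "x \<in> perms n \<Longrightarrow> (x, x) \<in> R"
  using equiv_perms unfolding equiv_def refl_on_def by blast

lemma cong_sym: "(x, y) \<in> R \<Longrightarrow> (y, x) \<in> R"
  using equiv_perms unfolding equiv_def sym_def by blast

lemma cong_trans: "(x, y) \<in> R \<Longrightarrow> (y, z) \<in> R \<Longrightarrow> (x, z) \<in> R"
  using equiv_perms unfolding equiv_def trans_def by blast

lemma class_eq_iff: "x \<in> perms n \<Longrightarrow> y \<in> perms n \<Longrightarrow> R``{x} = R``{y} \<longleftrightarrow> (x, y) \<in> R"
  using equiv_class_eq_iff[OF equiv_perms] by blast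

lemma finite_classes: "finite (perms n // R)"
  using finite_quotient[OF finite_perms] cong_in_perms by (metis subrelI SigmaI)

lemma cong_wjoin: "(x, y) \<in> R \<Longrightarrow> z \<in> perms n \<Longrightarrow> (wjoin n x z, wjoin n y z) \<in> R"
  using congruence cong_in_perms unfolding lattice_congruence_def by blast

lemma cong_wmeet: "(x, y) \<in> R \<Longrightarrow> z \<in> perms n \<Longrightarrow> (wmeet n x z, wmeet n y z) \<in> R"
  using congruence cong_in_perms unfolding lattice_congruence_def by blast

lemma cong_wjoin': "(x, y) \<in> R \<Longrightarrow> z \<in> perms n \<Longrightarrow> (wjoin n z x, wjoin n z y) \<in> R"
  using cong_wjoin cong_in_perms wjoin_commute by metis

lemma cong_wmeet': "(x, y) \<in> R \<Longrightarrow> z \<in> perms n \<Longrightarrow> (wmeet n z x, wmeet n z y) \<in> R"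
  using cong_wmeet cong_in_perms wmeet_commute by metis

lemma class_convex:
  assumes "(x, y) \<in> R" "z \<in> perms n" "weak_le x z" "weak_le z y"
  shows "(x, z) \<in> R"
proof -
  have "x \<in> perms n" "y \<in> perms n" using cong_in_perms assms(1) by auto
  then show ?thesis
    using cong_wmeet'[OF assms(1,2)] wmeet_absorb[OF assms(2) _ assms(4)]
      wmeet_absorb'[OF _ assms(2,3)]
    by simp
qed

lemma cong_if_mutually_below:
  assumes "(x, x') \<in> R" "(y, y') \<in> R" "weak_le x y'" "weak_le y x'"
  shows "(x, y) \<in> R"
proof -
  have p: "x \<in> perms n" "x' \<in> perms n" "y \<in> perms n" "y' \<in> perms n"
    using cong_in_perms assms by auto
  have "(wjoin n x y, y) \<in> R"
    using cong_wjoin'[OF assms(2) p(1)] wjoin_absorb[OF p(1,4) assms(3)] assms(2)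
      cong_trans cong_sym
    by metis
  moreover have "(wjoin n x y, x) \<in> R"
    using cong_wjoin[OF assms(1) p(3)] wjoin_absorb'[OF p(3,2) assms(4)] assms(1)
      cong_trans cong_sym
    by metis
  ultimately show ?thesis using cong_trans cong_sym by metis
qed

lemma qle_class_iff:
  assumes x: "x \<in> perms n" and y: "y \<in> perms n"
  shows "qle n R (R``{x}) (R``{y}) \<longleftrightarrow> (wjoin n x y, y) \<in> R"
proof
  assume "qle n R (R``{x}) (R``{y})"
  then obtain x1 y1 where h: "(x, x1) \<in> R" "(y, y1) \<in> R" "(wjoin n x1 y1, y1) \<in> R"
    unfolding qle_def by blast
  have "(wjoin n x y, wjoin n x1 y) \<in> R" using cong_wjoin[OF h(1) y] .
  moreover have "(wjoin n x1 y, wjoin n x1 y1) \<in> R"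
    using cong_wjoin'[OF h(2)] cong_in_perms h(1) by blast
  ultimately show "(wjoin n x y, y) \<in> R" using h(2,3) cong_trans cong_sym by blast
next
  assume "(wjoin n x y, y) \<in> R"
  then show "qle n R (R``{x}) (R``{y})" unfolding qle_def using cong_refl x y by blast
qed

lemma qle_class_if_weak_le:
  "x \<in> perms n \<Longrightarrow> y \<in> perms n \<Longrightarrow> weak_le x y \<Longrightarrow> qle n R (R``{x}) (R``{y})"
  using qle_class_iff wjoin_absorb cong_refl by simp

text \<open>A class \<open>R``{z}\<close> strictly between the two classes would contain \<open>(w \<or> z) \<and> swap_adj w k\<close>,
  an element between \<open>w\<close> and \<open>swap_adj w k\<close>.\<close>

lemma qcover_ascent:
  assumes w: "w \<in> perms n" and k: "ascent n w k" and nR: "(w, swap_adj w k) \<notin> R"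
  shows "qcover n R (R``{w}) (R``{swap_adj w k})"
proof -
  let ?w' = "swap_adj w k"
  have w': "?w' \<in> perms n" using ascent_swap_in_perms[OF w k] .
  have "\<not> (qle n R (R``{w}) (R``{z}) \<and> qle n R (R``{z}) (R``{?w'}))"
    if z: "z \<in> perms n" "R``{z} \<noteq> R``{w}" "R``{z} \<noteq> R``{?w'}" for z
  proof
    assume "qle n R (R``{w}) (R``{z}) \<and> qle n R (R``{z}) (R``{?w'})"
    then have h1: "(wjoin n w z, z) \<in> R" and h2: "(wjoin n z ?w', ?w') \<in> R"
      using qle_class_iff w w' z(1) by blast+
    let ?m = "wmeet n (wjoin n w z) ?w'"
    have jw: "wjoin n w z \<in> perms n" and jz: "wjoin n z ?w' \<in> perms n"
      using wjoin w w' z(1) by blast+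
    have "(?m, wmeet n z ?w') \<in> R" using cong_wmeet[OF h1 w'] .
    moreover have "(wmeet n z ?w', wmeet n z (wjoin n z ?w')) \<in> R"
      using cong_wmeet'[OF cong_sym[OF h2] z(1)] .
    moreover have "wmeet n z (wjoin n z ?w') = z"
      using wmeet_absorb[OF z(1) jz wjoin(2)[OF z(1) w']] .
    ultimately have "(?m, z) \<in> R" using cong_trans by metis
    moreover have "?m = w \<or> ?m = ?w'"
      using ascent_cover[OF w k wmeet(1)[OF jw w'] wmeet(4)[OF jw w' w wjoin(2)[OF w z(1)]
          ascent_weak_le_swap[OF w k]] wmeet(3)[OF jw w']] .
    ultimately show False using z class_eq_iff w w' cong_sym by metis
  qed
  moreover have "R``{w} \<noteq> R``{?w'}" using class_eq_iff[OF w w'] nR by simp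
  moreover have "qle n R (R``{w}) (R``{?w'})"
    using qle_class_if_weak_le[OF w w' ascent_weak_le_swap[OF w k]] .
  ultimately show ?thesis unfolding qcover_def by (auto elim!: quotientE)
qed

lemma class_top_exists:
  assumes x: "x \<in> perms n"
  shows "\<exists>t. (x, t) \<in> R \<and> (\<forall>u. (x, u) \<in> R \<longrightarrow> weak_le u t)"
proof -
  let ?S = "R``{x}"
  let ?f = "\<lambda>u. card (invs u)"
  have fin: "finite ?S"
    using finite_perms cong_in_perms by (metis finite_subset Image_singleton_iff subsetI)
  moreover have "?S \<noteq> {}" using cong_refl x by blast
  ultimately obtain t where t: "t \<in> ?S" "?f t = Max (?f ` ?S)"
    using Max_in[of "?f ` ?S"] by (metis (no_types, lifting) empty_is_image finite_imageI imageE)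
  have max: "?f u \<le> ?f t" if "u \<in> ?S" for u using t(2) fin that by simp
  have "weak_le u t" if "(x, u) \<in> R" for u
  proof -
    have ut: "(u, t) \<in> R" using that t cong_sym cong_trans by blast
    have tp: "t \<in> perms n" "u \<in> perms n" using cong_in_perms ut by auto
    let ?j = "wjoin n u t"
    text \<open>The join with \<open>u\<close> stays in the class and lies above \<open>t\<close>, so by maximality it is \<open>t\<close>.\<close>
    have "(?j, t) \<in> R" using cong_wjoin[OF ut tp(1)] wjoin_absorb[OF tp(1) tp(1)] by simp
    then have "card (invs ?j) \<le> card (invs t)" using max t cong_sym cong_trans by blast
    moreover have "invs t \<subseteq> invs ?j" using wjoin(3)[OF tp(2) tp(1)] unfolding weak_le_def .
    ultimately have "invs t = invs ?j"
      using card_subset_eq[OF finite_invs] by (metis le_antisym card_mono finite_invs)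
    then have "?j = t" using perms_invs_inj wjoin(1) tp by metis
    then show ?thesis using wjoin(2)[OF tp(2) tp(1)] by simp
  qed
  then show ?thesis using t by blast
qed

text \<open>Forcing in a polygon of the weak order with bottom \<open>u\<close>, top \<open>t\<close> and sides through
  \<open>u \<lessdot> a\<close> and \<open>u \<lessdot> b \<lessdot> b2\<close>: if \<open>u \<equiv> b\<close>, then \<open>a \<equiv> t\<close> because
  \<open>t = a \<or> b\<close>, and then \<open>u \<equiv> b2\<close> because \<open>u = b2 \<and> a\<close> and \<open>b2 = b2 \<and> t\<close>. For \<open>z = y\<close>
  the polygon is a square and \<open>b2 = b\<close>.\<close>

lemma polygon_cong:
  assumes "u \<in> perms n" "a \<in> perms n" "b \<in> perms n" "b2 \<in> perms n" "t \<in> perms n"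
    and ia: "invs a = insert x (invs u)" and ib: "invs b = insert y (invs u)"
    and ib2: "invs b2 = insert z (invs b)" and it: "invs t = insert x (invs b2)"
    and x: "x \<notin> invs b2"
    and forced: "\<And>w. w \<in> perms n \<Longrightarrow> x \<in> invs w \<Longrightarrow> y \<in> invs w \<Longrightarrow> z \<in> invs w"
    and ub: "(u, b) \<in> R"
  shows "(t, a) \<in> R" "(u, b2) \<in> R"
proof -
  have "wjoin n a b = t"
    using assms(2,3,5) by (rule wjoin_eqI) (use ia ib ib2 it forced in \<open>auto simp: weak_le_def\<close>)
  moreover have "wjoin n a u = a"
    using assms(1,2) ia by (intro wjoin_absorb') (auto simp: weak_le_def)
  ultimately have "(a, t) \<in> R" using cong_wjoin'[OF ub assms(2)] by simp
  then show "(t, a) \<in> R" by (rule cong_sym)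
  have "wmeet n b2 a = u"
    using assms(4,2,1) by (rule wmeet_eqI) (use ia ib ib2 x in \<open>auto simp: weak_le_def\<close>)
  moreover have "wmeet n b2 t = b2"
    using assms(4,5) it by (intro wmeet_absorb) (auto simp: weak_le_def)
  ultimately show "(u, b2) \<in> R" using cong_wmeet'[OF \<open>(a, t) \<in> R\<close> assms(4)] by simp
qed

lemma exit_lift_polygon:
  assumes u: "u \<in> perms n" and j: "ascent n u j" and k: "ascent n u k"
    and inside: "(u, swap_adj u j) \<in> R"
    and c: "c \<in> perms n" "ascent n c m" "invs c = insert z (invs (swap_adj u j))"
    and label: "swap_label c m = swap_label u k"
    and forced: "\<And>w. w \<in> perms n \<Longrightarrow> swap_label u k \<in> invs w \<Longrightarrow> swap_label u j \<in> invs w \<Longrightarrow>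
      z \<in> invs w"
  shows "(u, c) \<in> R \<and> card (invs u) < card (invs c) \<and> (swap_adj c m, swap_adj u k) \<in> R"
proof -
  have b: "swap_adj u j \<in> perms n" using ascent_swap_in_perms[OF u j] .
  have "invs u \<subset> invs c" using ascent_swap_invs[OF u j] ascent_label_notin_invs[OF u j] c(3) by auto
  then have card: "card (invs u) < card (invs c)" by (rule psubset_card_mono[OF finite_invs])
  note polygon = polygon_cong[OF u ascent_swap_in_perms[OF u k] b c(1)
      ascent_swap_in_perms[OF c(1,2)] ascent_swap_invs[OF u k] ascent_swap_invs[OF u j] c(3)
      ascent_swap_invs[OF c(1,2), unfolded label] ascent_label_notin_invs[OF c(1,2), unfolded label]
      _ inside]
  have "(swap_adj c m, swap_adj u k) \<in> R" by (rule polygon(1)) (rule forced)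
  moreover have "(u, c) \<in> R" by (rule polygon(2)) (rule forced)
  ultimately show ?thesis using card by blast
qed

text \<open>The polygon used is a square if the two ascents are far apart and a hexagon if they
  overlap.\<close>

lemma ascent_exit_lift:
  assumes u: "u \<in> perms n" and j: "ascent n u j" and k: "ascent n u k"
    and inside: "(u, swap_adj u j) \<in> R" and exit: "(u, swap_adj u k) \<notin> R"
  shows "\<exists>c m. (u, c) \<in> R \<and> card (invs u) < card (invs c) \<and> ascent n c m \<and>
    (swap_adj c m, swap_adj u k) \<in> R \<and> swap_label c m = swap_label u k"
proof -
  have "j \<noteq> k" using inside exit by blast
  have l: "length u = n" using perms_length[OF u] .
  let ?b = "swap_adj u j"
  have b: "?b \<in> perms n" using ascent_swap_in_perms[OF u j] .
  note lift = exit_lift_polygon[OF u j k inside]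
  consider "Suc j < k \<or> Suc k < j" | "j = Suc k" | "k = Suc j" using \<open>j \<noteq> k\<close> by linarith
  then show ?thesis
  proof cases
    case 1
    note c = commuting_ascents[OF 1 j k l]
    have "invs ?b = insert (swap_label u j) (invs ?b)" using ascent_swap_invs[OF u j] by auto
    then have "(u, ?b) \<in> R \<and> card (invs u) < card (invs ?b) \<and> (swap_adj ?b k, swap_adj u k) \<in> R"
      by (rule lift[OF b c(1) _ c(2)])
    then show ?thesis using c(1,2) by blast
  next
    case 2
    have "Suc (Suc k) < n" "u ! k < u ! Suc k" "u ! Suc k < u ! Suc (Suc k)"
      using j k 2 unfolding ascent_def by auto
    note h = hexagon_ascents[OF this(1) l this(2,3), folded 2]
    let ?c = "swap_adj ?b k"
    have labels: "swap_label u k = (u ! k, u ! j)" "swap_label u j = (u ! j, u ! Suc j)"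
      unfolding swap_label_def 2 by simp_all
    have forced: "(u ! k, u ! Suc j) \<in> invs w"
      if "w \<in> perms n" "(u ! k, u ! j) \<in> invs w" "(u ! j, u ! Suc j) \<in> invs w" for w
      using invs_trans that by blast
    have "(u, ?c) \<in> R \<and> card (invs u) < card (invs ?c) \<and> (swap_adj ?c j, swap_adj u k) \<in> R"
      by (rule lift[OF ascent_swap_in_perms[OF b h(5)] h(7) ascent_swap_invs[OF b h(5)]])
        (simp_all add: h(6,8) labels forced)
    then show ?thesis using h(7,8) labels by (intro exI[of _ ?c] exI[of _ j]) simp
  next
    case 3
    have "Suc (Suc j) < n" "u ! j < u ! Suc j" "u ! Suc j < u ! Suc (Suc j)"
      using j k 3 unfolding ascent_def by auto
    note h = hexagon_ascents[OF this(1) l this(2,3), folded 3]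
    let ?c = "swap_adj ?b k"
    have labels: "swap_label u k = (u ! k, u ! Suc k)" "swap_label u j = (u ! j, u ! k)"
      unfolding swap_label_def 3 by simp_all
    have forced: "(u ! j, u ! Suc k) \<in> invs w"
      if "w \<in> perms n" "(u ! k, u ! Suc k) \<in> invs w" "(u ! j, u ! k) \<in> invs w" for w
      using invs_trans that by blast
    have "(u, ?c) \<in> R \<and> card (invs u) < card (invs ?c) \<and> (swap_adj ?c j, swap_adj u k) \<in> R"
      by (rule lift[OF ascent_swap_in_perms[OF b h(1)] h(3) ascent_swap_invs[OF b h(1)]])
        (simp_all add: h(2,4) labels forced)
    then show ?thesis using h(3,4) labels by (intro exI[of _ ?c] exI[of _ j]) simp
  qed
qed

lemma class_top_exit_ascent:
  assumes t: "t \<in> perms n" and top: "\<And>u. (t, u) \<in> R \<Longrightarrow> weak_le u t"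
  shows "(t, u) \<in> R \<Longrightarrow> ascent n u k \<Longrightarrow> (t, swap_adj u k) \<notin> R \<Longrightarrow>
    \<exists>k'. ascent n t k' \<and> (swap_adj t k', swap_adj u k) \<in> R \<and> swap_label t k' = swap_label u k"
proof (induction "card (invs t) - card (invs u)" arbitrary: u k rule: less_induct)
  case less
  have u: "u \<in> perms n" using cong_in_perms less.prems(1) by blast
  show ?case
  proof (cases "u = t")
    case True
    then show ?thesis using less.prems cong_refl ascent_swap_in_perms u by blast
  next
    case False
    obtain j where j: "ascent n u j" "weak_le (swap_adj u j) t"
      using exists_ascent_below[OF u t top[OF less.prems(1)] False] by blast
    have "(u, swap_adj u j) \<in> R"
      using class_convex[OF cong_sym[OF less.prems(1)] ascent_swap_in_perms[OF u j(1)]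
          ascent_weak_le_swap[OF u j(1)] j(2)] .
    moreover have "(u, swap_adj u k) \<notin> R" using less.prems cong_trans by blast
    ultimately obtain c m where c: "(u, c) \<in> R" "card (invs u) < card (invs c)" "ascent n c m"
        "(swap_adj c m, swap_adj u k) \<in> R" "swap_label c m = swap_label u k"
      using ascent_exit_lift[OF u j(1) less.prems(2)] by blast
    have tc: "(t, c) \<in> R" using less.prems(1) c(1) cong_trans by blast
    have "card (invs c) \<le> card (invs t)"
      using top[OF tc] card_mono[OF finite_invs] unfolding weak_le_def by blast
    then have "card (invs t) - card (invs c) < card (invs t) - card (invs u)" using c(2) by linarith
    moreover have "(t, swap_adj c m) \<notin> R" using less.prems(3) c(4) cong_trans by blast
    ultimately obtain k' where "ascent n t k'" "(swap_adj t k', swap_adj c m) \<in> R"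
        "swap_label t k' = swap_label c m"
      using less.hyps tc c(3) by blast
    then show ?thesis using c(4,5) cong_trans by metis
  qed
qed

text \<open>Both edges lift to ascents of the top of the class; two different ascents of one
  permutation meet in it, so they lead to different classes.\<close>

lemma exit_label_unique:
  assumes w12: "(w1, w2) \<in> R" and k1: "ascent n w1 k1" and k2: "ascent n w2 k2"
    and out1: "(w1, swap_adj w1 k1) \<notin> R" and out2: "(w2, swap_adj w2 k2) \<notin> R"
    and s12: "(swap_adj w1 k1, swap_adj w2 k2) \<in> R"
  shows "swap_label w1 k1 = swap_label w2 k2"
proof -
  have w1: "w1 \<in> perms n" using cong_in_perms w12 by blast
  obtain t where t1: "(w1, t) \<in> R" and top1: "\<forall>u. (w1, u) \<in> R \<longrightarrow> weak_le u t"
    using class_top_exists[OF w1] by blast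
  have t: "t \<in> perms n" using cong_in_perms t1 by blast
  have top: "\<And>u. (t, u) \<in> R \<Longrightarrow> weak_le u t" using top1 t1 cong_trans by blast
  have "(t, w1) \<in> R" "(t, w2) \<in> R" using t1 w12 cong_sym cong_trans by blast+
  moreover have "(t, swap_adj w1 k1) \<notin> R" "(t, swap_adj w2 k2) \<notin> R"
    using out1 out2 \<open>(t, w1) \<in> R\<close> \<open>(t, w2) \<in> R\<close> cong_sym cong_trans by blast+
  ultimately obtain k1' k2' where
      e1: "ascent n t k1'" "(swap_adj t k1', swap_adj w1 k1) \<in> R"
        "swap_label t k1' = swap_label w1 k1"
    and e2: "ascent n t k2'" "(swap_adj t k2', swap_adj w2 k2) \<in> R"
        "swap_label t k2' = swap_label w2 k2"
    using class_top_exit_ascent[OF t top] k1 k2 by metis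
  let ?s1 = "swap_adj t k1'" and ?s2 = "swap_adj t k2'"
  have s: "?s1 \<in> perms n" "?s2 \<in> perms n" using ascent_swap_in_perms t e1(1) e2(1) by auto
  have s12': "(?s1, ?s2) \<in> R" using e1(2) e2(2) s12 cong_trans cong_sym by blast
  show ?thesis
  proof (rule ccontr)
    assume ne: "swap_label w1 k1 \<noteq> swap_label w2 k2"
    have "wmeet n ?s1 ?s2 = t"
      by (rule wmeet_eq_common_part[OF t s, of "{swap_label t k1'}" "{swap_label t k2'}"])
        (use ascent_swap_invs[OF t e1(1)] ascent_swap_invs[OF t e2(1)] e1(3) e2(3) ne in auto)
    then have "(?s1, t) \<in> R"
      using cong_wmeet'[OF s12' s(1)] wmeet_absorb[OF s(1) s(1)] by simp
    then show False using \<open>(t, swap_adj w1 k1) \<notin> R\<close> e1(2) cong_sym cong_trans by blast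
  qed
qed

end

section \<open>Edges leaving a congruence class\<close>

lemma card_image_le_card_image:
  assumes "finite (g ` A)" and "\<And>x y. x \<in> A \<Longrightarrow> y \<in> A \<Longrightarrow> g x = g y \<Longrightarrow> f x = f y"
  shows "card (f ` A) \<le> card (g ` A)"
proof -
  have "f x = f (inv_into A g (g x))" if "x \<in> A" for x
  proof -
    have "g x \<in> g ` A" using that by blast
    then show ?thesis using assms(2)[OF that inv_into_into] f_inv_into_f by metis
  qed
  then have "f ` A = (\<lambda>y. f (inv_into A g y)) ` g ` A" by (simp add: image_image)
  then show ?thesis using card_image_le[OF assms(1)] by simp
qed

text \<open>The hypothesis \<open>cross\<close> says that the graph \<open>(V, E)\<close> is connected. A spanning tree is
  grown one vertex at a time, each time along a new edge leaving the current vertex set.\<close>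

lemma card_le_card_edges_if_connected:
  assumes V: "finite V" and E: "finite E" "E \<subseteq> V \<times> V"
    and cross: "\<And>S. S \<subseteq> V \<Longrightarrow> S \<noteq> {} \<Longrightarrow> S \<noteq> V \<Longrightarrow> \<exists>(c, d) \<in> E. (c \<in> S) \<noteq> (d \<in> S)"
  shows "card V \<le> card E + 1"
proof (cases "V = {}")
  case False
  have grow: "\<exists>S F. S \<subseteq> V \<and> F \<subseteq> E \<inter> S \<times> S \<and> card S = Suc m \<and> card F = m"
    if "m < card V" for m
    using that
  proof (induction m)
    case 0
    obtain v where "v \<in> V" using False by blast
    then show ?case by (intro exI[of _ "{v}"] exI[of _ "{}"]) auto
  next
    case (Suc m)
    then obtain S F where SF: "S \<subseteq> V" "F \<subseteq> E \<inter> S \<times> S" "card S = Suc m" "card F = m" by auto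
    have fin: "finite S" "finite F" using SF(1,2) V E(1) finite_subset by blast+
    have "S \<noteq> V" "S \<noteq> {}" using SF(3) Suc.prems by auto
    then obtain c d where cd: "(c, d) \<in> E" "(c \<in> S) \<noteq> (d \<in> S)" using cross SF(1) by blast
    define v where "v = (if c \<in> S then d else c)"
    have v: "v \<in> V" "v \<notin> S" using cd E(2) by (auto simp: v_def)
    have new: "(c, d) \<notin> F" and "(c, d) \<in> insert v S \<times> insert v S"
      using SF(2) cd(2) by (auto simp: v_def)
    then have "insert (c, d) F \<subseteq> E \<inter> insert v S \<times> insert v S" using SF(2) cd(1) by blast
    moreover have "insert v S \<subseteq> V" using SF(1) v(1) by blast
    moreover have "card (insert v S) = Suc (Suc m)" using fin(1) v(2) SF(3) by simp
    moreover have "card (insert (c, d) F) = Suc m" using fin(2) new SF(4) by simp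
    ultimately show ?case by blast
  qed
  have "card V - 1 < card V" using False V by (simp add: card_gt_0_iff)
  then obtain S F where "S \<subseteq> V \<and> F \<subseteq> E \<inter> S \<times> S \<and> card S = card V \<and> card F = card V - 1"
    using grow by fastforce
  then have "card V - 1 \<le> card E" using card_mono[OF E(1), of F] by auto
  then show ?thesis by linarith
qed simp

lemma interval_boundary:
  assumes "S \<subseteq> {1..n}" "S \<noteq> {}" "S \<noteq> {1..n}"
  shows "\<exists>a. 1 \<le> a \<and> Suc a \<le> n \<and> (a \<in> S) \<noteq> (Suc a \<in> S)"
proof (rule ccontr)
  assume no_boundary: "\<not> ?thesis"
  have "a \<in> S \<longleftrightarrow> 1 \<in> S" if "1 \<le> a" "a \<le> n" for a
    using that by (induction a rule: nat_induct_at_least) (use no_boundary in auto)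
  then show False using assms by (cases "1 \<in> S") auto
qed

lemma crossing_swaps_make_adjacent:
  assumes closed: "\<And>w k. w \<in> Z \<Longrightarrow> Suc k < length w \<Longrightarrow> (w ! k \<in> S) \<noteq> (w ! Suc k \<in> S) \<Longrightarrow>
      swap_adj w k \<in> Z"
  shows "w \<in> Z \<Longrightarrow> i < j \<Longrightarrow> j < length w \<Longrightarrow> (w ! i \<in> S) \<noteq> (w ! j \<in> S) \<Longrightarrow>
    \<exists>w' \<in> Z. \<exists>m. i \<le> m \<and> m < j \<and> length w' = length w \<and> w' ! m = w ! i \<and> w' ! Suc m = w ! j \<and>
      (\<forall>p. p < i \<or> j < p \<longrightarrow> w' ! p = w ! p)"
proof (induction "j - i" arbitrary: w i j rule: less_induct)
  case less
  note w = less.prems(1) and ij = less.prems(2) and j = less.prems(3) and cross = less.prems(4)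
  show ?case
  proof (cases "j = Suc i")
    case True
    then show ?thesis using w ij j cross by auto
  next
    case False
    then have ij': "Suc i < j" using ij by simp
    then have dec: "j - Suc i < j - i" by simp
    show ?thesis
    proof (cases "(w ! Suc i \<in> S) = (w ! i \<in> S)")
      case False
      let ?w1 = "swap_adj w i"
      have w1: "?w1 \<in> Z" using closed[OF w] ij' j False by simp
      have w1_nth: "?w1 ! Suc i = w ! i" "?w1 ! j = w ! j" "\<forall>p. p < i \<or> j < p \<longrightarrow> ?w1 ! p = w ! p"
        using ij' j by (auto simp: nth_swap_adj)
      obtain w' m where "w' \<in> Z" "Suc i \<le> m" "m < j" "length w' = length w"
          "w' ! m = w ! i" "w' ! Suc m = w ! j" "\<forall>p. p < Suc i \<or> j < p \<longrightarrow> w' ! p = ?w1 ! p"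
        using less.hyps[of j "Suc i" ?w1, OF dec w1 ij'] j cross w1_nth by auto
      then show ?thesis using w1_nth(3) by (intro bexI[of _ w'] exI[of _ m]) auto
    next
      case True
      text \<open>Bring \<open>w ! Suc i\<close> next to \<open>w ! j\<close>, swap them, then bring \<open>w ! i\<close> next to \<open>w ! j\<close>.\<close>
      obtain w1 m1 where w1: "w1 \<in> Z" "Suc i \<le> m1" "m1 < j" "length w1 = length w"
          "w1 ! m1 = w ! Suc i" "w1 ! Suc m1 = w ! j" "\<forall>p. p < Suc i \<or> j < p \<longrightarrow> w1 ! p = w ! p"
        using less.hyps[of j "Suc i" w, OF dec w ij' j] cross True by auto
      let ?w2 = "swap_adj w1 m1"
      have w2: "?w2 \<in> Z" using closed[OF w1(1)] w1 j cross True by simp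
      have w2_nth: "?w2 ! i = w ! i" "?w2 ! m1 = w ! j" "\<forall>p. p < i \<or> j < p \<longrightarrow> ?w2 ! p = w ! p"
        using w1 j by (auto simp: nth_swap_adj)
      obtain w' m where "w' \<in> Z" "i \<le> m" "m < m1" "length w' = length w"
          "w' ! m = w ! i" "w' ! Suc m = w ! j" "\<forall>p. p < i \<or> m1 < p \<longrightarrow> w' ! p = ?w2 ! p"
        using less.hyps[of m1 i ?w2, OF _ w2] w1 j cross w2_nth by (auto simp: diff_less_mono)
      then show ?thesis using w1(3) w2_nth(3) by (intro bexI[of _ w'] exI[of _ m]) auto
    qed
  qed
qed

context lattice_cong
begin

definition exit_edges :: "nat list \<Rightarrow> (nat list \<times> nat) set" where
  "exit_edges x = {(w, k). w \<in> perms n \<and> ascent n w k \<and> ((x, w) \<in> R \<longleftrightarrow> (x, swap_adj w k) \<notin> R)}"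

definition exit_target :: "nat list \<Rightarrow> nat list \<times> nat \<Rightarrow> nat list set" where
  "exit_target x = (\<lambda>(w, k). if (x, w) \<in> R then R``{swap_adj w k} else R``{w})"

definition exit_labels :: "nat list \<Rightarrow> (nat \<times> nat) set" where
  "exit_labels x = (\<lambda>(w, k). swap_label w k) ` exit_edges x"

lemma exit_edge_not_cong: "(w, k) \<in> exit_edges x \<Longrightarrow> (w, swap_adj w k) \<notin> R"
  unfolding exit_edges_def using cong_trans cong_sym by blast

lemma exit_target_adjacent:
  assumes x: "x \<in> perms n" and e: "(w, k) \<in> exit_edges x"
  shows "exit_target x (w, k) \<in> perms n // R \<and> qadj n R (R``{x}) (exit_target x (w, k))"
proof -
  have w: "w \<in> perms n" and k: "ascent n w k" using e unfolding exit_edges_def by auto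
  have s: "swap_adj w k \<in> perms n" using ascent_swap_in_perms[OF w k] .
  have qc: "qcover n R (R``{w}) (R``{swap_adj w k})"
    using qcover_ascent[OF w k exit_edge_not_cong[OF e]] .
  show ?thesis
  proof (cases "(x, w) \<in> R")
    case True
    then have "R``{x} = R``{w}" using class_eq_iff x w by blast
    then show ?thesis using qc True quotientI[OF s] unfolding exit_target_def qadj_def by simp
  next
    case False
    then have "R``{x} = R``{swap_adj w k}"
      using e class_eq_iff x s unfolding exit_edges_def by blast
    then show ?thesis using qc False quotientI[OF w] unfolding exit_target_def qadj_def by simp
  qed
qed

lemma exit_target_determines_label:
  assumes e1: "(w1, k1) \<in> exit_edges x" and e2: "(w2, k2) \<in> exit_edges x"
    and eq: "exit_target x (w1, k1) = exit_target x (w2, k2)"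
  shows "swap_label w1 k1 = swap_label w2 k2"
proof -
  have w: "w1 \<in> perms n" "w2 \<in> perms n" and k: "ascent n w1 k1" "ascent n w2 k2"
    using e1 e2 unfolding exit_edges_def by auto
  have s: "swap_adj w1 k1 \<in> perms n" "swap_adj w2 k2 \<in> perms n"
    using ascent_swap_in_perms w k by auto
  have "(w1, w2) \<in> R \<and> (swap_adj w1 k1, swap_adj w2 k2) \<in> R"
  proof (cases "(x, w1) \<in> R"; cases "(x, w2) \<in> R")
    assume x1: "(x, w1) \<in> R" and x2: "(x, w2) \<in> R"
    then have "R``{swap_adj w1 k1} = R``{swap_adj w2 k2}" using eq unfolding exit_target_def by simp
    then show ?thesis using class_eq_iff[OF s] x1 x2 cong_sym cong_trans by blast
  next
    assume x1: "(x, w1) \<notin> R" and x2: "(x, w2) \<notin> R"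
    then have "R``{w1} = R``{w2}" using eq unfolding exit_target_def by simp
    moreover have "(x, swap_adj w1 k1) \<in> R" "(x, swap_adj w2 k2) \<in> R"
      using e1 e2 x1 x2 unfolding exit_edges_def by blast+
    ultimately show ?thesis using class_eq_iff[OF w] cong_sym cong_trans by blast
  next
    assume x1: "(x, w1) \<in> R" and x2: "(x, w2) \<notin> R"
    then have "R``{swap_adj w1 k1} = R``{w2}" using eq unfolding exit_target_def by simp
    then have "(w2, swap_adj w1 k1) \<in> R" using class_eq_iff[OF s(1) w(2)] cong_sym by blast
    moreover have "(w1, swap_adj w2 k2) \<in> R"
      using e2 x1 x2 cong_sym cong_trans unfolding exit_edges_def by blast
    ultimately have "(w1, w2) \<in> R" using cong_if_mutually_below ascent_weak_le_swap w k by blast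
    then show ?thesis using x1 x2 cong_trans by blast
  next
    assume x1: "(x, w1) \<notin> R" and x2: "(x, w2) \<in> R"
    then have "R``{w1} = R``{swap_adj w2 k2}" using eq unfolding exit_target_def by simp
    then have "(w1, swap_adj w2 k2) \<in> R" using class_eq_iff[OF w(1) s(2)] by blast
    moreover have "(w2, swap_adj w1 k1) \<in> R"
      using e1 x1 x2 cong_sym cong_trans unfolding exit_edges_def by blast
    ultimately have "(w2, w1) \<in> R" using cong_if_mutually_below ascent_weak_le_swap w k by blast
    then show ?thesis using x1 x2 cong_trans by blast
  qed
  then show ?thesis
    using exit_label_unique k exit_edge_not_cong[OF e1] exit_edge_not_cong[OF e2] by blast
qed

lemma card_exit_labels_le_qdegree:
  assumes x: "x \<in> perms n"
  shows "card (exit_labels x) \<le> qdegree n R (R``{x})"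
proof -
  let ?N = "{Y \<in> perms n // R. qadj n R (R``{x}) Y}"
  have sub: "exit_target x ` exit_edges x \<subseteq> ?N" using exit_target_adjacent[OF x] by auto
  have fin: "finite ?N" using finite_classes by simp
  have "card (exit_labels x) \<le> card (exit_target x ` exit_edges x)"
    unfolding exit_labels_def
    using finite_subset[OF sub fin] exit_target_determines_label[where x = x]
    by (intro card_image_le_card_image) auto
  also have "\<dots> \<le> card ?N" using card_mono[OF fin sub] .
  finally show ?thesis unfolding qdegree_def .
qed

lemma exit_labels_subset: "exit_labels x \<subseteq> {1..n} \<times> {1..n}"
proof
  fix p assume "p \<in> exit_labels x"
  then obtain w k where p: "p = swap_label w k" and w: "w \<in> perms n" and k: "Suc k < n"
    unfolding exit_labels_def exit_edges_def ascent_def by force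
  then have "w ! k \<in> set w" "w ! Suc k \<in> set w" using perms_length[OF w] by auto
  then show "p \<in> {1..n} \<times> {1..n}" using p perms_set[OF w] unfolding swap_label_def by auto
qed

lemma class_closed_under_crossing_swaps:
  assumes uncrossed: "\<forall>(c, d) \<in> exit_labels x. (c \<in> S) = (d \<in> S)"
    and w: "w \<in> R``{x}" and k: "Suc k < length w" and cross: "(w ! k \<in> S) \<noteq> (w ! Suc k \<in> S)"
  shows "swap_adj w k \<in> R``{x}"
proof (rule ccontr)
  assume out: "swap_adj w k \<notin> R``{x}"
  have wp: "w \<in> perms n" using w cong_in_perms by blast
  have kn: "Suc k < n" using k perms_length[OF wp] by simp
  show False
  proof (cases "w ! k < w ! Suc k")
    case True
    then have "(w, k) \<in> exit_edges x" using wp w out kn unfolding exit_edges_def ascent_def by simp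
    then show False using uncrossed cross unfolding exit_labels_def swap_label_def by fastforce
  next
    case False
    let ?w' = "swap_adj w k"
    have "w ! k \<noteq> w ! Suc k" using cross by auto
    then have "ascent n ?w' k" using False k kn unfolding ascent_def by (simp add: nth_swap_adj)
    moreover have "swap_adj ?w' k = w" using swap_adj_swap_adj[OF k] .
    ultimately have "(?w', k) \<in> exit_edges x"
      using swap_adj_in_perms[OF wp kn] w out unfolding exit_edges_def by simp
    then show False
      using uncrossed cross k unfolding exit_labels_def swap_label_def by (force simp: nth_swap_adj)
  qed
qed

lemma id_class_bottom:
  assumes y: "y \<in> perms n" and le: "qle n R (R``{y}) (R``{id_perm n})"
  shows "R``{y} = R``{id_perm n}"
  using le qle_class_iff[OF y id_perm_in_perms] wjoin_absorb'[OF id_perm_in_perms y id_perm_weak_le]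
    class_eq_iff[OF y id_perm_in_perms] by simp

end

section \<open>Essential congruences\<close>

locale essential_cong = lattice_cong +
  assumes essential: "essential n R"
begin

text \<open>If an atom \<open>id \<lessdot> s\<close> of the weak order were contracted, then joining with any \<open>x\<close> would
  contract every edge of the fence \<open>f(k+1, k+2, {})\<close>, since \<open>x \<or> s = swap_adj x j\<close> for each
  of its edges \<open>x \<lessdot> swap_adj x j\<close>.\<close>

lemma atom_not_cong:
  assumes k: "Suc k < n"
  shows "(id_perm n, swap_adj (id_perm n) k) \<notin> R"
proof
  assume atom: "(id_perm n, swap_adj (id_perm n) k) \<in> R"
  let ?s = "swap_adj (id_perm n) k"
  have s: "?s \<in> perms n" using ascent_swap_in_perms[OF id_perm_in_perms ascent_id_perm[OF k]] .
  have "fence n (Suc k) (Suc (Suc k)) {} \<subseteq> R"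
  proof
    fix e assume "e \<in> fence n (Suc k) (Suc (Suc k)) {}"
    then obtain x j where e: "e = (x, swap_adj x j)" "x \<in> perms n" "Suc j < n"
      "x ! j = Suc k" "x ! Suc j = Suc (Suc k)" unfolding fence_def by blast
    have j: "ascent n x j" and lab: "swap_label x j = (Suc k, Suc (Suc k))"
      using e unfolding ascent_def swap_label_def by simp_all
    have sx: "swap_adj x j \<in> perms n" using ascent_swap_in_perms[OF e(2) j] .
    have ix: "invs (swap_adj x j) = insert (Suc k, Suc (Suc k)) (invs x)"
      using ascent_swap_invs[OF e(2) j] lab by simp
    have "wjoin n x ?s = swap_adj x j"
      by (rule wjoin_eqI[OF e(2) s sx]) (auto simp: weak_le_def ix invs_swap_id_perm[OF k])
    moreover have "wjoin n x (id_perm n) = x"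
      using wjoin_absorb'[OF id_perm_in_perms e(2) id_perm_weak_le] .
    ultimately show "e \<in> R" using cong_wjoin'[OF atom e(2)] e(1) by simp
  qed
  then have "(Suc k, Suc (Suc k), {}) \<in> F_of n R" unfolding F_of_def using k by simp
  then show False using essential unfolding essential_def by blast
qed

text \<open>Meeting with the atom \<open>s\<close> that inverts \<open>a, a + 1\<close> turns an edge swapping adjacent
  entries \<open>a, a + 1\<close> into the edge \<open>id \<lessdot> s\<close>.\<close>

lemma consecutive_swap_not_cong:
  assumes x: "x \<in> perms n" and j: "ascent n x j" and consec: "x ! Suc j = Suc (x ! j)"
  shows "(x, swap_adj x j) \<notin> R"
proof
  assume edge: "(x, swap_adj x j) \<in> R"
  have "x ! j \<in> set x" "x ! Suc j \<in> set x" using j perms_length[OF x] unfolding ascent_def by auto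
  then have "1 \<le> x ! j" "x ! Suc j \<le> n" using perms_set[OF x] by auto
  then obtain k where k: "x ! j = Suc k" "Suc k < n"
    using consec by (metis Suc_le_lessD not0_implies_Suc not_one_le_zero)
  let ?s = "swap_adj (id_perm n) k"
  have s: "?s \<in> perms n" using ascent_swap_in_perms[OF id_perm_in_perms ascent_id_perm[OF k(2)]] .
  have inv_s: "invs ?s = {swap_label x j}" using invs_swap_id_perm[OF k(2)] k(1) consec
    unfolding swap_label_def by simp
  have sx: "swap_adj x j \<in> perms n" using ascent_swap_in_perms[OF x j] .
  have "wmeet n ?s x = id_perm n"
  proof (rule wmeet_eqI[OF s x id_perm_in_perms id_perm_weak_le id_perm_weak_le])
    fix w assume "weak_le w ?s" "weak_le w x"
    then have "invs w \<subseteq> {swap_label x j}" "invs w \<subseteq> invs x"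
      using inv_s unfolding weak_le_def by auto
    then show "weak_le w (id_perm n)"
      using ascent_label_notin_invs[OF x j] unfolding weak_le_def invs_id_perm by blast
  qed
  moreover have "wmeet n ?s (swap_adj x j) = ?s"
    using wmeet_absorb[OF s sx] ascent_swap_invs[OF x j] inv_s unfolding weak_le_def by simp
  ultimately have "(id_perm n, ?s) \<in> R" using cong_wmeet'[OF edge s] by simp
  then show False using atom_not_cong[OF k(2)] by simp
qed

lemma adjacent_consecutive_not_cong:
  assumes w: "w \<in> perms n" and m: "Suc m < n" and vals: "{w ! m, w ! Suc m} = {a, Suc a}"
  shows "(w, swap_adj w m) \<notin> R"
proof (cases "w ! m = a")
  case True
  then show ?thesis
    using consecutive_swap_not_cong[OF w] vals m unfolding ascent_def
    by (auto simp: doubleton_eq_iff)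
next
  case False
  let ?w' = "swap_adj w m"
  have l: "Suc m < length w" using m perms_length[OF w] by simp
  have "?w' ! m = a" "?w' ! Suc m = Suc a"
    using False vals l by (auto simp: nth_swap_adj doubleton_eq_iff)
  then have "(?w', swap_adj ?w' m) \<notin> R"
    using consecutive_swap_not_cong[OF swap_adj_in_perms[OF w m]] m unfolding ascent_def by simp
  then show ?thesis using swap_adj_swap_adj[OF l] cong_sym by metis
qed

text \<open>If no exit label crossed \<open>S\<close>, the class of \<open>x\<close> would be closed under swapping adjacent
  entries on different sides of \<open>S\<close>; moving the two values \<open>a, a + 1\<close> that straddle the
  boundary of \<open>S\<close> next to each other would then produce an edge inside the class swapping
  consecutive values.\<close>

lemma exit_labels_cross:
  assumes x: "x \<in> perms n" and S: "S \<subseteq> {1..n}" "S \<noteq> {}" "S \<noteq> {1..n}"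
  shows "\<exists>(c, d) \<in> exit_labels x. (c \<in> S) \<noteq> (d \<in> S)"
proof (rule ccontr)
  assume "\<not> ?thesis"
  then have closed: "\<And>w k. w \<in> R``{x} \<Longrightarrow> Suc k < length w \<Longrightarrow> (w ! k \<in> S) \<noteq> (w ! Suc k \<in> S) \<Longrightarrow>
      swap_adj w k \<in> R``{x}"
    using class_closed_under_crossing_swaps by blast
  obtain a where a: "1 \<le> a" "Suc a \<le> n" "(a \<in> S) \<noteq> (Suc a \<in> S)"
    using interval_boundary[OF S] by blast
  have "a \<in> set x" "Suc a \<in> set x" using perms_set[OF x] a by auto
  then obtain p q where pq: "p < n" "q < n" "x ! p = a" "x ! q = Suc a"
    using perms_length[OF x] by (auto simp: in_set_conv_nth)
  then consider "p < q" | "q < p" by (metis linorder_neqE_nat n_not_Suc_n)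
  then obtain i j where ij: "i < j" "j < n" "{x ! i, x ! j} = {a, Suc a}"
  proof cases
    case 1
    then show ?thesis using that[of p q] pq by simp
  next
    case 2
    then show ?thesis using that[of q p] pq by (simp add: insert_commute)
  qed
  have "x \<in> R``{x}" using cong_refl[OF x] by blast
  moreover have cross: "(x ! i \<in> S) \<noteq> (x ! j \<in> S)" using ij(3) a(3) by (auto simp: doubleton_eq_iff)
  moreover have "j < length x" using ij(2) perms_length[OF x] by simp
  ultimately obtain w m where w: "w \<in> R``{x}" "m < j" "w ! m = x ! i" "w ! Suc m = x ! j"
    using crossing_swaps_make_adjacent[OF closed _ ij(1)] by blast
  have wp: "w \<in> perms n" using w(1) cong_in_perms by blast
  have "Suc m < length w" using w(2) ij(2) perms_length[OF wp] by simp
  then have "swap_adj w m \<in> R``{x}" using closed w cross by simp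
  then have "(w, swap_adj w m) \<in> R" using w(1) cong_sym cong_trans by blast
  then show False using adjacent_consecutive_not_cong[OF wp] w ij ij(3) by simp
qed

lemma qdegree_ge:
  assumes X: "X \<in> perms n // R"
  shows "n - 1 \<le> qdegree n R X"
proof -
  obtain x where x: "x \<in> perms n" "X = R``{x}" using X by (auto elim!: quotientE)
  have "card {1..n} \<le> card (exit_labels x) + 1"
  proof (rule card_le_card_edges_if_connected)
    show "finite (exit_labels x)" using exit_labels_subset finite_subset by blast
  qed (use exit_labels_subset exit_labels_cross[OF x(1)] in auto)
  then show ?thesis using card_exit_labels_le_qdegree[OF x(1)] x(2) by simp
qed

lemma upper_cover_of_id_class:
  assumes y: "y \<in> perms n" and cover: "qcover n R (R``{id_perm n}) (R``{y})"
  shows "\<exists>k < n - 1. R``{y} = R``{swap_adj (id_perm n) k}"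
proof -
  let ?X = "R``{id_perm n}"
  have "id_perm n \<noteq> y" using cover unfolding qcover_def by blast
  then obtain k where k: "ascent n (id_perm n) k" "weak_le (swap_adj (id_perm n) k) y"
    using exists_ascent_below[OF id_perm_in_perms y id_perm_weak_le] by blast
  let ?s = "swap_adj (id_perm n) k"
  have s: "?s \<in> perms n" using ascent_swap_in_perms[OF id_perm_in_perms k(1)] .
  have kn: "k < n - 1" using k(1) unfolding ascent_def by linarith
  have "qle n R ?X (R``{?s})"
    using qle_class_if_weak_le[OF id_perm_in_perms s] ascent_weak_le_swap[OF id_perm_in_perms k(1)]
    by blast
  moreover have "qle n R (R``{?s}) (R``{y})" using qle_class_if_weak_le[OF s y k(2)] .
  moreover have "R``{?s} \<noteq> ?X"
    using atom_not_cong kn class_eq_iff[OF s id_perm_in_perms] cong_sym by force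
  moreover have "\<not> (\<exists>Z \<in> perms n // R. Z \<noteq> ?X \<and> Z \<noteq> R``{y} \<and> qle n R ?X Z \<and> qle n R Z (R``{y}))"
    using cover unfolding qcover_def by (rule conjunct2[OF conjunct2])
  ultimately have "R``{?s} = R``{y}" using quotientI[OF s] by blast
  then show ?thesis using kn by blast
qed

lemma qdegree_id_class_le: "qdegree n R (R``{id_perm n}) \<le> n - 1"
proof -
  let ?X = "R``{id_perm n}"
  have "{Y \<in> perms n // R. qadj n R ?X Y} \<subseteq> (\<lambda>k. R``{swap_adj (id_perm n) k}) ` {..<n - 1}"
  proof
    fix Y assume Y: "Y \<in> {Y \<in> perms n // R. qadj n R ?X Y}"
    then obtain y where y: "y \<in> perms n" "Y = R``{y}" by (auto elim!: quotientE)
    have "\<not> qcover n R Y ?X" using id_class_bottom y unfolding qcover_def by blast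
    then have "qcover n R ?X Y" using Y unfolding qadj_def by blast
    then show "Y \<in> (\<lambda>k. R``{swap_adj (id_perm n) k}) ` {..<n - 1}"
      using upper_cover_of_id_class y by auto
  qed
  then have "qdegree n R ?X \<le> card ((\<lambda>k. R``{swap_adj (id_perm n) k}) ` {..<n - 1})"
    unfolding qdegree_def by (intro card_mono) auto
  also have "\<dots> \<le> n - 1" using card_image_le[of "{..<n - 1}"] by simp
  finally show ?thesis .
qed

end

theorem mainTheorem12:
  fixes n :: nat and R :: "(nat list \<times> nat list) set"
  assumes "n \<ge> 1" and "lattice_congruence n R" and "essential n R"
  shows "min_degree_Q n R = n - 1"
proof -
  interpret essential_cong n R using assms(2,3) by unfold_locales
  have id_class: "R``{id_perm n} \<in> perms n // R" using quotientI[OF id_perm_in_perms] .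
  show ?thesis
    unfolding min_degree_Q_def
  proof (rule Min_eqI)
    show "finite (qdegree n R ` (perms n // R))" using finite_classes by simp
    show "n - 1 \<le> d" if "d \<in> qdegree n R ` (perms n // R)" for d using that qdegree_ge by blast
    show "n - 1 \<in> qdegree n R ` (perms n // R)"
      using id_class qdegree_id_class_le qdegree_ge[OF id_class] by (metis image_eqI le_antisym)
  qed
qed

end
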